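(* Let $C$ be an $[n,k]$ code over $\mathbb{F}_q$ with $d(C^\perp)=4$. Then $\gamma(C)\le k-2$ $(=k-d(C^\perp)+2)$.
   Context: An $[n,k]$ code over $\mathbb{F}_q$ is a $k$-dimensional subspace $C\subseteq\mathbb{F}_q^n$; write $E=\{1,\dots,n\}$. For $\bm{x}\in\mathbb{F}_q^n$, $\mathrm{supp}(\bm{x})=\{i: x_i\neq 0\}$ and the weight is $|\mathrm{supp}(\bm{x})|$; for $B\subseteq\mathbb{F}_q^n$, $\mathrm{Supp}(B)=\bigcup_{\bm{x}\in B}\mathrm{supp}(\bm{x})$. $C^\perp$ is the dual code with respect to the standard inner product and $d(C^\perp)$ is the minimum weight of a nonzero codeword of $C^\perp$. The covering dimension is $\gamma(C)=\infty$ if $\mathrm{Supp}(C)\neq E$, and otherwise $\gamma(C)$ is the least positive integer $r$ such that $C$ has an $r$-dimensional subspace $D$ with $\mathrm{Supp}(D)=E$. *)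

theory Defs
  imports Main "HOL-Library.Function_Algebras" "HOL-Library.Extended_Nat"
begin

text \<open>Vectors of F_q^n are functions from a finite index type 'n (the coordinate set E,
  with n = CARD('n)) to a finite field 'a (F_q).\<close>

definition cscale :: "'a::field \<Rightarrow> ('n \<Rightarrow> 'a) \<Rightarrow> ('n \<Rightarrow> 'a)" where
  "cscale c x = (\<lambda>i. c * x i)"

global_interpretation fv: vector_space "cscale :: 'a::field \<Rightarrow> ('n \<Rightarrow> 'a) \<Rightarrow> ('n \<Rightarrow> 'a)"
  by unfold_locales (auto simp: cscale_def algebra_simps)

definition is_code :: "('n::finite \<Rightarrow> 'a::{finite,field}) set \<Rightarrow> nat \<Rightarrow> bool" where
  "is_code C k \<longleftrightarrow> fv.subspace C \<and> fv.dim C = k"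

definition supp :: "('n \<Rightarrow> 'a::zero) \<Rightarrow> 'n set" where
  "supp x = {i. x i \<noteq> 0}"

definition Supp :: "('n \<Rightarrow> 'a::zero) set \<Rightarrow> 'n set" where
  "Supp B = (\<Union>x\<in>B. supp x)"

definition weight :: "('n \<Rightarrow> 'a::zero) \<Rightarrow> nat" where
  "weight x = card (supp x)"

definition dual :: "('n::finite \<Rightarrow> 'a::field) set \<Rightarrow> ('n \<Rightarrow> 'a) set" where
  "dual C = {y. \<forall>x\<in>C. (\<Sum>i\<in>UNIV. x i * y i) = 0}"

text \<open>Minimum weight of a nonzero codeword (infinity if there is none).\<close>
definition min_dist :: "('n \<Rightarrow> 'a::zero) set \<Rightarrow> enat" where
  "min_dist D = (INF x\<in>D - {0}. enat (weight x))"

definition covering_dim :: "('n::finite \<Rightarrow> 'a::{finite,field}) set \<Rightarrow> enat" where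
  "covering_dim C = (if Supp C \<noteq> UNIV then \<infinity>
     else enat (LEAST r. 0 < r \<and> (\<exists>D. fv.subspace D \<and> D \<subseteq> C \<and> fv.dim D = r \<and> Supp D = UNIV)))"

end

theory Submission
  imports Defs "HOL-Library.Cardinality"
begin

text \<open>Put \<open>K = C\<^sup>\<perp>\<close> and read vectors modulo \<open>K\<close> as points of the projective geometry of
  \<open>\<bbbF>\<^sub>q\<^sup>n / K\<close>. If some line of this geometry carries no unit vector, i.e. \<open>u\<close>, \<open>v\<close> are
  independent modulo \<open>K\<close> and no \<open>e\<^sub>j\<close> lies in \<open>\<langle>u, v\<rangle> + K\<close>, then
  \<open>D = C \<inter> u\<^sup>\<perp> \<inter> v\<^sup>\<perp>\<close> has dimension \<open>k - 2\<close> and full support: a coordinate \<open>j\<close> vanishing on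
  \<open>D\<close> would put \<open>e\<^sub>j\<close> into \<open>\<langle>u, v\<rangle> + K\<close>. Because every nonzero word of \<open>C\<^sup>\<perp>\<close> has weight
  at least 4, the unit vectors are \<open>n\<close> points no three of which are collinear, and counting the
  lines through two well-chosen points shows that such a set of points cannot meet every line.\<close>

lemma cscale_apply [simp]: "cscale c x i = c * x i"
  by (simp add: cscale_def)

definition unit_vec :: "'n \<Rightarrow> 'n \<Rightarrow> 'a::field" where
  "unit_vec j = (\<lambda>i. if i = j then 1 else 0)"

definition dotp :: "('n::finite \<Rightarrow> 'a::field) \<Rightarrow> ('n \<Rightarrow> 'a) \<Rightarrow> 'a" where
  "dotp u x = (\<Sum>i\<in>UNIV. u i * x i)"

lemma dotp_add: "dotp u (x + y) = dotp u x + dotp u y"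
  by (simp add: dotp_def algebra_simps sum.distrib)

lemma dotp_diff: "dotp u (x - y) = dotp u x - dotp u y"
  by (simp add: dotp_def algebra_simps sum_subtractf)

lemma dotp_cscale: "dotp u (cscale c x) = c * dotp u x"
  by (simp add: dotp_def algebra_simps sum_distrib_left)

lemma dotp_zero: "dotp u 0 = 0"
  by (simp add: dotp_def)

lemma dotp_unit_vec: "dotp (unit_vec j) x = x j"
proof -
  have "dotp (unit_vec j) x = (\<Sum>i\<in>UNIV. if i = j then x i else 0)"
    unfolding dotp_def by (rule sum.cong) (auto simp: unit_vec_def)
  then show ?thesis by simp
qed

lemma dotp_commute: "dotp u x = dotp x u"
  unfolding dotp_def by (rule sum.cong) simp_all

lemma mem_dual_iff: "y \<in> dual C \<longleftrightarrow> (\<forall>x\<in>C. dotp y x = 0)"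
  unfolding dual_def dotp_commute[of y] by (simp add: dotp_def)

lemma subspace_dual: "fv.subspace (dual C)"
  by (rule fv.subspaceI) (auto simp: dual_def algebra_simps sum.distrib sum_distrib_left[symmetric])

section \<open>Projective geometry modulo a subspace\<close>

text \<open>Modulo a subspace \<open>K\<close>, \<open>proj_point K u\<close> and \<open>proj_line K u v\<close> are the preimages of the
  projective point \<open>[u]\<close> and of the projective line through \<open>[u]\<close> and \<open>[v]\<close> of the quotient
  space by \<open>K\<close>; \<open>indep_mod K u v\<close> says that \<open>[u]\<close> and \<open>[v]\<close> are distinct points.\<close>

definition proj_point :: "('n \<Rightarrow> 'a::field) set \<Rightarrow> ('n \<Rightarrow> 'a) \<Rightarrow> ('n \<Rightarrow> 'a) set" where
  "proj_point K u = {cscale a u + k | a k. k \<in> K}"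

definition proj_line :: "('n \<Rightarrow> 'a::field) set \<Rightarrow> ('n \<Rightarrow> 'a) \<Rightarrow> ('n \<Rightarrow> 'a) \<Rightarrow> ('n \<Rightarrow> 'a) set" where
  "proj_line K u v = {cscale a u + cscale b v + k | a b k. k \<in> K}"

definition indep_mod :: "('n \<Rightarrow> 'a::field) set \<Rightarrow> ('n \<Rightarrow> 'a) \<Rightarrow> ('n \<Rightarrow> 'a) \<Rightarrow> bool" where
  "indep_mod K u v \<longleftrightarrow> (\<forall>a b. cscale a u + cscale b v \<in> K \<longrightarrow> a = 0 \<and> b = 0)"

definition lines_through :: "('n \<Rightarrow> 'a::field) set \<Rightarrow> ('n \<Rightarrow> 'a) \<Rightarrow> ('n \<Rightarrow> 'a) set set" where
  "lines_through K u = {proj_line K u v | v. indep_mod K u v}"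

lemma indep_mod_commute: "indep_mod K u v \<longleftrightarrow> indep_mod K v u"
proof -
  have "cscale a u + cscale b v = cscale b v + cscale a u" for a b
    by (rule add.commute)
  then show ?thesis unfolding indep_mod_def by metis
qed

lemma proj_line_commute: "proj_line K u v = proj_line K v u"
proof -
  have "cscale a u + cscale b v + k = cscale b v + cscale a u + k" for a b k
    by (simp add: add.commute)
  then show ?thesis unfolding proj_line_def set_eq_iff mem_Collect_eq by metis
qed

lemma proj_pointE:
  assumes "x \<in> proj_point K u"
  obtains a where "(\<lambda>t. x t - a * u t) \<in> K"
proof -
  obtain a k where "x = cscale a u + k" "k \<in> K"
    using assms unfolding proj_point_def by auto
  then have "(\<lambda>t. x t - a * u t) \<in> K" by (simp add: fun_eq_iff)
  then show thesis by (rule that)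
qed

lemma proj_lineE:
  assumes "x \<in> proj_line K u v"
  obtains a b where "(\<lambda>t. x t - a * u t - b * v t) \<in> K"
proof -
  obtain a b k where "x = cscale a u + cscale b v + k" "k \<in> K"
    using assms unfolding proj_line_def by auto
  then have "(\<lambda>t. x t - a * u t - b * v t) \<in> K" by (simp add: fun_eq_iff)
  then show thesis by (rule that)
qed

locale quotient_geometry =
  fixes K :: "('n::finite \<Rightarrow> 'a::{finite,field}) set"
  assumes subspace_K: "fv.subspace K"
begin

lemma proj_point_subset_line: "proj_point K u \<subseteq> proj_line K u v"
proof
  fix w assume "w \<in> proj_point K u"
  then obtain a k where "w = cscale a u + cscale 0 v + k" "k \<in> K"
    unfolding proj_point_def by auto
  then show "w \<in> proj_line K u v" unfolding proj_line_def by blast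
qed

lemma mem_proj_line_right: "v \<in> proj_line K u v"
proof -
  have "v = cscale 0 u + cscale 1 v + 0" by (auto simp: fun_eq_iff)
  with fv.subspace_0[OF subspace_K] show ?thesis unfolding proj_line_def by blast
qed

lemma indep_mod_if_not_mem_point:
  assumes u: "u \<notin> K" and w: "w \<notin> proj_point K u"
  shows "indep_mod K u w"
  unfolding indep_mod_def
proof (intro allI impI)
  fix a b assume comb: "cscale a u + cscale b w \<in> K"
  show "a = 0 \<and> b = 0"
  proof (cases "b = 0")
    case False
    have "w = cscale (- a / b) u + cscale (1 / b) (cscale a u + cscale b w)"
      using False by (auto simp: fun_eq_iff field_simps)
    with fv.subspace_scale[OF subspace_K comb] have "w \<in> proj_point K u"
      unfolding proj_point_def by blast
    with w show ?thesis by simp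
  next
    case True
    show ?thesis
    proof (rule ccontr)
      assume "\<not> (a = 0 \<and> b = 0)"
      with True have "u = cscale (1 / a) (cscale a u + cscale b w)" by (auto simp: fun_eq_iff)
      with fv.subspace_scale[OF subspace_K comb, of "1 / a"] u show False by simp
    qed
  qed
qed

lemma proj_line_eq:
  assumes indep: "indep_mod K u v" and w: "w \<in> proj_line K u v" "w \<notin> proj_point K u"
  shows "proj_line K u w = proj_line K u v"
proof -
  obtain a b k where w_eq: "w = cscale a u + cscale b v + k" and k: "k \<in> K"
    using w(1) unfolding proj_line_def by auto
  have "b \<noteq> 0"
  proof
    assume "b = 0"
    then have "w = cscale a u + k" using w_eq by (auto simp: fun_eq_iff)
    with k w(2) show False unfolding proj_point_def by blast
  qed
  show ?thesis
  proof
    show "proj_line K u w \<subseteq> proj_line K u v"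
    proof
      fix z assume "z \<in> proj_line K u w"
      then obtain \<alpha> \<beta> k' where z: "z = cscale \<alpha> u + cscale \<beta> w + k'" and k': "k' \<in> K"
        unfolding proj_line_def by auto
      have "z = cscale (\<alpha> + \<beta> * a) u + cscale (\<beta> * b) v + (cscale \<beta> k + k')"
        using z w_eq by (auto simp: fun_eq_iff algebra_simps)
      moreover have "cscale \<beta> k + k' \<in> K"
        using subspace_K k k' by (simp add: fv.subspace_add fv.subspace_scale)
      ultimately show "z \<in> proj_line K u v" unfolding proj_line_def by blast
    qed
  next
    show "proj_line K u v \<subseteq> proj_line K u w"
    proof
      fix z assume "z \<in> proj_line K u v"
      then obtain \<alpha> \<beta> k' where z: "z = cscale \<alpha> u + cscale \<beta> v + k'" and k': "k' \<in> K"
        unfolding proj_line_def by auto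
      have "z = cscale (\<alpha> - \<beta> * a / b) u + cscale (\<beta> / b) w + (k' + cscale (- \<beta> / b) k)"
        using z w_eq \<open>b \<noteq> 0\<close> by (auto simp: fun_eq_iff field_simps)
      moreover have "k' + cscale (- \<beta> / b) k \<in> K"
        by (rule fv.subspace_add[OF subspace_K k' fv.subspace_scale[OF subspace_K k]])
      ultimately show "z \<in> proj_line K u w" unfolding proj_line_def by blast
    qed
  qed
qed

lemma card_proj_point:
  assumes u: "u \<notin> K"
  shows "card (proj_point K u) = CARD('a) * card K"
proof -
  have "inj_on (\<lambda>(a, k). cscale a u + k) (UNIV \<times> K)"
  proof (rule inj_onI, clarify)
    fix a k a' k' assume k: "k \<in> K" "k' \<in> K" and eq: "cscale a u + k = cscale a' u + k'"
    have "a = a'"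
    proof (rule ccontr)
      assume "a \<noteq> a'"
      have "u = cscale (1 / (a - a')) (k' - k)"
      proof
        fix x
        have "(a - a') * u x = k' x - k x"
          using fun_cong[OF eq, of x] by (simp add: algebra_simps)
        then have "u x = (k' x - k x) / (a - a')"
          using \<open>a \<noteq> a'\<close> by (metis nonzero_mult_div_cancel_left right_minus_eq)
        then show "u x = cscale (1 / (a - a')) (k' - k) x" by simp
      qed
      moreover have "cscale (1 / (a - a')) (k' - k) \<in> K"
        using subspace_K k by (simp add: fv.subspace_scale fv.subspace_diff)
      ultimately show False using u by simp
    qed
    with eq show "a = a' \<and> k = k'" by (auto simp: fun_eq_iff)
  qed
  moreover have "proj_point K u = (\<lambda>(a, k). cscale a u + k) ` (UNIV \<times> K)"
    unfolding proj_point_def by auto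
  ultimately show ?thesis by (simp add: card_image card_cartesian_product)
qed

lemma card_proj_line:
  assumes indep: "indep_mod K u v"
  shows "card (proj_line K u v) = CARD('a) * (CARD('a) * card K)"
proof -
  have "inj_on (\<lambda>(a, b, k). cscale a u + cscale b v + k) (UNIV \<times> UNIV \<times> K)"
  proof (rule inj_onI)
    fix x y assume "x \<in> UNIV \<times> UNIV \<times> K" "y \<in> UNIV \<times> UNIV \<times> K"
      and "(\<lambda>(a, b, k). cscale a u + cscale b v + k) x = (\<lambda>(a, b, k). cscale a u + cscale b v + k) y"
    then obtain a b k a' b' k' where xy: "x = (a, b, k)" "y = (a', b', k')" and k: "k \<in> K" "k' \<in> K"
      and eq: "cscale a u + cscale b v + k = cscale a' u + cscale b' v + k'"
      by (cases x, cases y) auto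
    have "cscale (a - a') u + cscale (b - b') v = k' - k"
      using eq by (auto simp: fun_eq_iff algebra_simps dest!: fun_cong)
    moreover have "k' - k \<in> K" using subspace_K k by (simp add: fv.subspace_diff)
    ultimately have "a = a'" "b = b'" using indep unfolding indep_mod_def by (metis eq_iff_diff_eq_0)+
    with eq xy show "x = y" by (auto simp: fun_eq_iff)
  qed
  moreover have "proj_line K u v = (\<lambda>(a, b, k). cscale a u + cscale b v + k) ` (UNIV \<times> UNIV \<times> K)"
    unfolding proj_line_def image_def by fastforce
  ultimately show ?thesis by (simp add: card_image card_cartesian_product)
qed

lemma lines_through_cover:
  assumes u: "u \<notin> K"
  shows "UNIV - proj_point K u = (\<Union>l\<in>lines_through K u. l - proj_point K u)"
proof
  show "UNIV - proj_point K u \<subseteq> (\<Union>l\<in>lines_through K u. l - proj_point K u)"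
  proof
    fix w assume "w \<in> UNIV - proj_point K u"
    with indep_mod_if_not_mem_point[OF u] mem_proj_line_right
    show "w \<in> (\<Union>l\<in>lines_through K u. l - proj_point K u)"
      unfolding lines_through_def by blast
  qed
qed auto

lemma lines_through_disjoint:
  assumes "l \<in> lines_through K u" "l' \<in> lines_through K u" "l \<noteq> l'"
  shows "(l - proj_point K u) \<inter> (l' - proj_point K u) = {}"
proof (rule ccontr)
  obtain v v' where l: "l = proj_line K u v" "indep_mod K u v"
    and l': "l' = proj_line K u v'" "indep_mod K u v'"
    using assms(1,2) unfolding lines_through_def by blast
  assume "(l - proj_point K u) \<inter> (l' - proj_point K u) \<noteq> {}"
  then obtain w where "w \<in> l" "w \<in> l'" "w \<notin> proj_point K u" by blast
  then have "l = proj_line K u w" "l' = proj_line K u w"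
    using proj_line_eq l l' by metis+
  with assms(3) show False by simp
qed

lemma card_lines_through:
  assumes u: "u \<notin> K"
  shows "card (UNIV - proj_point K u)
    = card (lines_through K u) * (CARD('a) * (CARD('a) * card K) - CARD('a) * card K)"
proof -
  have card_line: "card (l - proj_point K u) = CARD('a) * (CARD('a) * card K) - CARD('a) * card K"
    if "l \<in> lines_through K u" for l
    using that card_proj_line card_proj_point[OF u] proj_point_subset_line
    unfolding lines_through_def by (auto simp: card_Diff_subset)
  have "card (UNIV - proj_point K u) = (\<Sum>l\<in>lines_through K u. card (l - proj_point K u))"
    unfolding lines_through_cover[OF u] by (rule card_UN_disjoint) (simp_all add: lines_through_disjoint)
  also have "\<dots> = card (lines_through K u) * (CARD('a) * (CARD('a) * card K) - CARD('a) * card K)"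
    by (simp add: card_line)
  finally show ?thesis .
qed

lemma card_lines_through_eq:
  assumes "u \<notin> K" "u' \<notin> K"
  shows "card (lines_through K u) = card (lines_through K u')"
proof -
  have "2 \<le> CARD('a)"
    using card_mono[of UNIV "{0::'a, 1}"] by simp
  moreover have "0 < card K"
    using fv.subspace_0[OF subspace_K] by (auto simp: card_gt_0_iff)
  ultimately have "CARD('a) * card K < CARD('a) * (CARD('a) * card K)"
    by simp
  moreover have "card (UNIV - proj_point K u) = card (UNIV - proj_point K u')"
    using assms by (simp add: card_Diff_subset card_proj_point)
  ultimately show ?thesis
    using card_lines_through[OF assms(1)] card_lines_through[OF assms(2)] by simp
qed

end

section \<open>Unit vectors modulo a code of minimum weight four\<close>

text \<open>With \<open>K = C\<^sup>\<perp>\<close> and \<open>d(C\<^sup>\<perp>) \<ge> 4\<close>, the unit vectors represent \<open>n\<close> distinct points of the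
  quotient geometry, no three of them collinear.\<close>

locale min_weight_four = quotient_geometry K
  for K :: "('n::finite \<Rightarrow> 'a::{finite,field}) set" +
  assumes four_le_weight: "y \<in> K \<Longrightarrow> y \<noteq> 0 \<Longrightarrow> 4 \<le> weight y"
begin

lemma vanishes_if_supp_three:
  assumes y: "y \<in> K" and out: "\<And>t. t \<noteq> i \<Longrightarrow> t \<noteq> j \<Longrightarrow> t \<noteq> l \<Longrightarrow> y t = 0"
  shows "y s = 0"
proof -
  have "supp y \<subseteq> {i, j, l}" using out unfolding supp_def by auto
  then have "weight y \<le> card {i, j, l}" unfolding weight_def by (simp add: card_mono)
  also have "\<dots> \<le> 3" by (simp add: card_insert_le_m1)
  finally have "y = 0" using four_le_weight[OF y] by fastforce
  then show ?thesis by simp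
qed

lemma unit_vec_not_mem: "unit_vec j \<notin> K"
proof
  assume "unit_vec j \<in> K"
  from vanishes_if_supp_three[OF this, of j j j j] show False by (simp add: unit_vec_def)
qed

lemma indep_mod_unit_vec:
  assumes "i \<noteq> j"
  shows "indep_mod K (unit_vec i) (unit_vec j)"
  unfolding indep_mod_def
proof (intro allI impI)
  fix a b assume y: "cscale a (unit_vec i) + cscale b (unit_vec j) \<in> K"
  show "a = 0 \<and> b = 0"
    using vanishes_if_supp_three[OF y, of i j j i] vanishes_if_supp_three[OF y, of i j j j] assms
    by (simp add: unit_vec_def)
qed

lemma unit_vec_not_mem_secant:
  assumes "l \<noteq> i" "l \<noteq> j"
  shows "unit_vec l \<notin> proj_line K (unit_vec i) (unit_vec j)"
proof
  assume "unit_vec l \<in> proj_line K (unit_vec i) (unit_vec j)"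
  then obtain a b where y: "(\<lambda>t. unit_vec l t - a * unit_vec i t - b * unit_vec j t) \<in> K"
    by (rule proj_lineE)
  from vanishes_if_supp_three[OF y, of l i j l] assms show False by (simp add: unit_vec_def)
qed

lemma inj_on_secants: "inj_on (\<lambda>j. proj_line K (unit_vec c) (unit_vec j)) (UNIV - {c})"
proof (rule inj_onI, rule ccontr)
  fix j j' assume "j \<in> UNIV - {c}" "j' \<in> UNIV - {c}" "j \<noteq> j'"
    and eq: "proj_line K (unit_vec c) (unit_vec j) = proj_line K (unit_vec c) (unit_vec j')"
  then have "unit_vec j' \<in> proj_line K (unit_vec c) (unit_vec j)"
    using mem_proj_line_right by metis
  with unit_vec_not_mem_secant \<open>j' \<in> UNIV - {c}\<close> \<open>j \<noteq> j'\<close> show False by auto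
qed

lemma pair_not_mem:
  assumes "a \<noteq> b"
  shows "unit_vec a + unit_vec b \<notin> K"
proof
  assume "unit_vec a + unit_vec b \<in> K"
  from vanishes_if_supp_three[OF this, of a b b a] assms show False by (simp add: unit_vec_def)
qed

lemma unit_vec_not_mem_point_pair:
  assumes "a \<noteq> b"
  shows "unit_vec j \<notin> proj_point K (unit_vec a + unit_vec b)"
proof
  assume "unit_vec j \<in> proj_point K (unit_vec a + unit_vec b)"
  then obtain c where y: "(\<lambda>t. unit_vec j t - c * (unit_vec a + unit_vec b) t) \<in> K"
    by (rule proj_pointE)
  have "unit_vec j t - c * (unit_vec a + unit_vec b) t = 0" for t
    using vanishes_if_supp_three[OF y, of a b j] by (simp add: unit_vec_def)
  from this[of a] this[of b] this[of j] assms show False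
    by (auto simp: unit_vec_def split: if_splits)
qed

lemma pair_not_mem_point_unit_vec:
  assumes "c \<noteq> a" "c \<noteq> b" "a \<noteq> b"
  shows "unit_vec a + unit_vec b \<notin> proj_point K (unit_vec c)"
proof
  assume "unit_vec a + unit_vec b \<in> proj_point K (unit_vec c)"
  then obtain d where y: "(\<lambda>t. (unit_vec a + unit_vec b) t - d * unit_vec c t) \<in> K"
    by (rule proj_pointE)
  from vanishes_if_supp_three[OF y, of a b c a] assms show False by (simp add: unit_vec_def)
qed

lemma secant_through_pair:
  assumes "c \<noteq> a" "c \<noteq> b" "a \<noteq> b"
    and "unit_vec a + unit_vec b \<in> proj_line K (unit_vec c) (unit_vec c')"
  shows "c' \<noteq> a \<and> c' \<noteq> b"
proof -
  obtain d e where y: "(\<lambda>t. (unit_vec a + unit_vec b) t - d * unit_vec c t - e * unit_vec c' t) \<in> K"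
    using assms(4) by (rule proj_lineE)
  show ?thesis
    using vanishes_if_supp_three[OF y, of a b c b] vanishes_if_supp_three[OF y, of a b c a] assms
    by (auto simp: unit_vec_def)
qed

lemma proj_line_pair_unit_vec:
  assumes "a \<noteq> b"
  shows "proj_line K (unit_vec a + unit_vec b) (unit_vec a)
    = proj_line K (unit_vec a + unit_vec b) (unit_vec b)"
proof (rule proj_line_eq)
  show "indep_mod K (unit_vec a + unit_vec b) (unit_vec b)"
    using indep_mod_if_not_mem_point pair_not_mem unit_vec_not_mem_point_pair assms by blast
  have "unit_vec a = cscale 1 (unit_vec a + unit_vec b) + cscale (- 1) (unit_vec b) + 0"
    by (auto simp: fun_eq_iff)
  with fv.subspace_0[OF subspace_K]
  show "unit_vec a \<in> proj_line K (unit_vec a + unit_vec b) (unit_vec b)"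
    unfolding proj_line_def by blast
  show "unit_vec a \<notin> proj_point K (unit_vec a + unit_vec b)"
    using unit_vec_not_mem_point_pair[OF assms] .
qed

lemma lines_through_pair:
  assumes meets: "\<And>u v. indep_mod K u v \<Longrightarrow> \<exists>j. unit_vec j \<in> proj_line K u v"
    and "a \<noteq> b"
  shows "lines_through K (unit_vec a + unit_vec b)
    = (\<lambda>j. proj_line K (unit_vec a + unit_vec b) (unit_vec j)) ` (UNIV - {b})"
    (is "lines_through K ?X = ?line_X ` _")
proof
  show "lines_through K ?X \<subseteq> ?line_X ` (UNIV - {b})"
  proof
    fix l assume "l \<in> lines_through K ?X"
    then obtain w where l: "l = proj_line K ?X w" and w: "indep_mod K ?X w"
      unfolding lines_through_def by blast
    obtain j where "unit_vec j \<in> l"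
      using meets[OF w] l by blast
    then have "l = ?line_X j"
      using proj_line_eq[OF w, of "unit_vec j"] unit_vec_not_mem_point_pair[OF \<open>a \<noteq> b\<close>] l
      by simp
    also have "\<dots> = ?line_X (if j = b then a else j)"
      using proj_line_pair_unit_vec[OF \<open>a \<noteq> b\<close>] by simp
    finally show "l \<in> ?line_X ` (UNIV - {b})"
      using \<open>a \<noteq> b\<close> by auto
  qed
  show "?line_X ` (UNIV - {b}) \<subseteq> lines_through K ?X"
    using indep_mod_if_not_mem_point[OF pair_not_mem unit_vec_not_mem_point_pair] \<open>a \<noteq> b\<close>
    unfolding lines_through_def by blast
qed

lemma card_lines_through_pair_less:
  assumes meets: "\<And>u v. indep_mod K u v \<Longrightarrow> \<exists>j. unit_vec j \<in> proj_line K u v"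
    and "a \<noteq> b" "c \<noteq> b" "c' \<noteq> b" "c' \<noteq> c"
    and "unit_vec c' \<in> proj_line K (unit_vec a + unit_vec b) (unit_vec c)"
  shows "card (lines_through K (unit_vec a + unit_vec b)) < CARD('n) - 1"
proof -
  let ?X = "unit_vec a + unit_vec b"
  let ?line_X = "\<lambda>j. proj_line K ?X (unit_vec j)"
  have "indep_mod K ?X (unit_vec c)"
    using indep_mod_if_not_mem_point pair_not_mem unit_vec_not_mem_point_pair \<open>a \<noteq> b\<close> by blast
  then have "?line_X c' = ?line_X c"
    using proj_line_eq assms(6) unit_vec_not_mem_point_pair[OF \<open>a \<noteq> b\<close>] by blast
  with assms(3-5) have "\<not> inj_on ?line_X (UNIV - {b})"
    unfolding inj_on_def by blast
  moreover have "lines_through K ?X = ?line_X ` (UNIV - {b})"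
    by (rule lines_through_pair[OF meets \<open>a \<noteq> b\<close>])
  ultimately show ?thesis
    using card_image_le[of "UNIV - {b}" ?line_X] inj_on_iff_eq_card[of "UNIV - {b}" ?line_X]
    by (simp add: card_Diff_singleton)
qed

text \<open>Counting lines: every point lies on equally many lines. Through \<open>[e\<^sub>c]\<close> there are at
  least the \<open>n - 1\<close> secants; if every line met the unit vectors, there would be at most \<open>n - 1\<close>
  lines through \<open>[e\<^sub>a + e\<^sub>b]\<close>, so the secants would be all lines through \<open>[e\<^sub>c]\<close>. The one
  through \<open>[e\<^sub>a + e\<^sub>b]\<close> then carries a second unit vector \<open>e\<^sub>c\<^sub>'\<close>, and counting again gives
  at most \<open>n - 2\<close> lines through \<open>[e\<^sub>a + e\<^sub>b]\<close>.\<close>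

lemma exists_line_missing_unit_vecs:
  fixes a b c :: 'n
  assumes "a \<noteq> b" "c \<noteq> a" "c \<noteq> b"
  shows "\<exists>u v. indep_mod K u v \<and> (\<forall>j. unit_vec j \<notin> proj_line K u v)"
proof (rule ccontr)
  assume "\<not> ?thesis"
  then have meets: "\<And>u v. indep_mod K u v \<Longrightarrow> \<exists>j. unit_vec j \<in> proj_line K u v"
    by blast
  obtain X where X_def: "X = unit_vec a + unit_vec b"
    and X: "X \<notin> K" "X \<notin> proj_point K (unit_vec c)"
    using pair_not_mem pair_not_mem_point_unit_vec assms by blast
  define secants where "secants = (\<lambda>j. proj_line K (unit_vec c) (unit_vec j)) ` (UNIV - {c})"
  have card_X: "card (lines_through K X) \<le> CARD('n) - 1"
    using lines_through_pair[OF meets \<open>a \<noteq> b\<close>] card_image_le[of "UNIV - {b}"]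
    unfolding X_def by (simp add: card_Diff_singleton)
  have secants_sub: "secants \<subseteq> lines_through K (unit_vec c)"
    unfolding secants_def lines_through_def using indep_mod_unit_vec by auto
  have card_secants: "card secants = CARD('n) - 1"
    unfolding secants_def using inj_on_secants by (simp add: card_image card_Diff_singleton)
  have card_c: "card (lines_through K (unit_vec c)) = card (lines_through K X)"
    using card_lines_through_eq[OF unit_vec_not_mem X(1)] .
  have "secants = lines_through K (unit_vec c)"
    using secants_sub card_secants card_c card_X card_mono[OF _ secants_sub]
    by (intro card_subset_eq) auto
  moreover have "proj_line K (unit_vec c) X \<in> lines_through K (unit_vec c)"
    using indep_mod_if_not_mem_point[OF unit_vec_not_mem X(2)] unfolding lines_through_def by auto
  ultimately obtain c' where "c' \<noteq> c"
    and secant: "proj_line K (unit_vec c) X = proj_line K (unit_vec c) (unit_vec c')"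
    unfolding secants_def by blast
  have "X \<in> proj_line K (unit_vec c) (unit_vec c')"
    using mem_proj_line_right[of X "unit_vec c"] secant by simp
  then have "c' \<noteq> b"
    using secant_through_pair[OF assms(2,3,1)] unfolding X_def by blast
  moreover have "unit_vec c' \<in> proj_line K X (unit_vec c)"
    using mem_proj_line_right[of "unit_vec c'" "unit_vec c"] secant proj_line_commute[of K "unit_vec c" X]
    by simp
  ultimately have "card (lines_through K X) < CARD('n) - 1"
    unfolding X_def using card_lines_through_pair_less[OF meets] assms \<open>c' \<noteq> c\<close> by blast
  with card_c card_secants card_mono[OF _ secants_sub] show False
    by simp
qed

end

section \<open>A codimension-two subcode of full support\<close>

lemma card_le_dim_if_independent:
  fixes B V :: "('n::finite \<Rightarrow> 'a::{finite,field}) set"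
  assumes "fv.independent B" "B \<subseteq> V"
  shows "card B \<le> fv.dim V"
proof -
  obtain BV where BV: "V \<subseteq> fv.span BV" "card BV = fv.dim V"
    using fv.basis_exists by blast
  have "B \<subseteq> fv.span BV"
    using assms(2) BV(1) by (rule order_trans)
  with fv.independent_span_bound[OF _ assms(1)] have "card B \<le> card BV"
    by simp
  with BV(2) show ?thesis by simp
qed

lemma dim_pos_if_nonzero:
  fixes D :: "('n::finite \<Rightarrow> 'a::{finite,field}) set"
  assumes "x \<in> D" "x \<noteq> 0"
  shows "0 < fv.dim D"
proof -
  have "fv.independent {x}"
    using fv.independent_insertI[of x "{}"] assms(2) by (simp add: fv.span_empty)
  with card_le_dim_if_independent[of "{x}" D] assms(1) show ?thesis by simp
qed

lemma dim_add_two_le: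
  fixes C D :: "('n::finite \<Rightarrow> 'a::{finite,field}) set"
  assumes D: "fv.subspace D" "D \<subseteq> C" and x: "x1 \<in> C" "x2 \<in> C"
    and x2: "x2 \<notin> D" and x1: "x1 \<notin> fv.span (insert x2 D)"
  shows "fv.dim D + 2 \<le> fv.dim C"
proof -
  obtain B where B: "B \<subseteq> D" "fv.independent B" "D \<subseteq> fv.span B" "card B = fv.dim D"
    using fv.basis_exists by blast
  have span_B: "fv.span B = D"
    using fv.span_minimal[OF B(1) D(1)] B(3) by blast
  have "x2 \<notin> fv.span B" "x1 \<notin> fv.span (insert x2 B)"
    using x1 x2 span_B fv.span_mono[of "insert x2 B" "insert x2 D"] B(1) by auto
  then have "fv.independent (insert x1 (insert x2 B))"
    by (intro fv.independent_insertI B(2))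
  moreover have "insert x1 (insert x2 B) \<subseteq> C"
    using B(1) D(2) x by auto
  moreover have "x1 \<notin> insert x2 B" "x2 \<notin> B"
    using \<open>x2 \<notin> fv.span B\<close> \<open>x1 \<notin> fv.span (insert x2 B)\<close> fv.span_base by blast+
  then have "card (insert x1 (insert x2 B)) = fv.dim D + 2"
    using B(4) by simp
  ultimately show ?thesis
    using card_le_dim_if_independent by metis
qed

lemma lincomb_mem_dual:
  assumes "\<And>x. x \<in> C \<Longrightarrow> \<alpha> * dotp u x + \<beta> * dotp v x = 0"
  shows "cscale \<alpha> u + cscale \<beta> v \<in> dual C"
proof -
  have "dotp (cscale \<alpha> u + cscale \<beta> v) x = \<alpha> * dotp u x + \<beta> * dotp v x" for x
    by (simp add: dotp_def algebra_simps sum.distrib sum_distrib_left)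
  with assms show ?thesis by (simp add: mem_dual_iff)
qed

lemma Supp_eq_UNIV_if_unit_vec_not_mem_dual:
  assumes "\<And>j. unit_vec j \<notin> dual C"
  shows "Supp C = UNIV"
proof (rule ccontr)
  assume "Supp C \<noteq> UNIV"
  then obtain j where "\<forall>x\<in>C. x j = 0" by (auto simp: Supp_def supp_def)
  then have "unit_vec j \<in> dual C" by (simp add: mem_dual_iff dotp_unit_vec)
  with assms show False by blast
qed

text \<open>The functionals \<open>dotp u\<close> and \<open>dotp v\<close> are linearly independent on \<open>C\<close>, which is
  what independence of \<open>u\<close> and \<open>v\<close> modulo \<open>C\<^sup>\<perp>\<close> means.\<close>

lemma exists_dotp_one_zero:
  assumes C: "fv.subspace C" and indep: "indep_mod (dual C) u v"
  shows "\<exists>x\<in>C. dotp u x = 1 \<and> dotp v x = 0"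
proof -
  have "\<exists>x0\<in>C. dotp u x0 \<noteq> 0"
  proof (rule ccontr)
    assume "\<not> ?thesis"
    then have "cscale 1 u + cscale 0 v \<in> dual C" by (intro lincomb_mem_dual) auto
    with indep show False unfolding indep_mod_def using one_neq_zero by blast
  qed
  then obtain x0 where x0: "x0 \<in> C" "dotp u x0 \<noteq> 0" by blast
  define r where "r = dotp v x0 / dotp u x0"
  have "\<exists>x\<in>C. dotp v x \<noteq> r * dotp u x"
  proof (rule ccontr)
    assume "\<not> ?thesis"
    then have "cscale r u + cscale (- 1) v \<in> dual C" by (intro lincomb_mem_dual) auto
    with indep show False unfolding indep_mod_def using one_neq_zero neg_equal_0_iff_equal by blast
  qed
  then obtain x where x: "x \<in> C" "dotp v x \<noteq> r * dotp u x" by blast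
  define z where "z = x - cscale (dotp u x / dotp u x0) x0"
  have z: "z \<in> C" "dotp u z = 0" "dotp v z = dotp v x - r * dotp u x"
    using C x(1) x0 by (simp_all add: z_def r_def fv.subspace_diff fv.subspace_scale dotp_diff dotp_cscale)
  define x1 where "x1 = cscale (1 / dotp u x0) x0 - cscale (r / dotp v z) z"
  have "x1 \<in> C"
    using C x0(1) z(1) by (simp add: x1_def fv.subspace_diff fv.subspace_scale)
  moreover have "dotp u x1 = 1" "dotp v x1 = 0"
    using x0(2) x(2) z(2,3) by (simp_all add: x1_def r_def dotp_diff dotp_cscale)
  ultimately show ?thesis by blast
qed

lemma Supp_common_kernel:
  assumes C: "fv.subspace C"
    and x1: "x1 \<in> C" "dotp u x1 = 1" "dotp v x1 = 0"
    and x2: "x2 \<in> C" "dotp u x2 = 0" "dotp v x2 = 1"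
    and misses: "\<And>j. unit_vec j \<notin> proj_line (dual C) u v"
  shows "Supp {x \<in> C. dotp u x = 0 \<and> dotp v x = 0} = UNIV"
proof (rule ccontr)
  assume "Supp {x \<in> C. dotp u x = 0 \<and> dotp v x = 0} \<noteq> UNIV"
  then obtain j where j: "\<And>x. x \<in> C \<Longrightarrow> dotp u x = 0 \<Longrightarrow> dotp v x = 0 \<Longrightarrow> x j = 0"
    by (auto simp: Supp_def supp_def)
  define y where "y = (\<lambda>t. unit_vec j t - x1 j * u t - x2 j * v t)"
  have "y \<in> dual C"
    unfolding mem_dual_iff
  proof
    fix x assume "x \<in> C"
    \<comment> \<open>project \<open>x\<close> into the common kernel along \<open>x1\<close> and \<open>x2\<close>\<close>
    define z where "z = x - cscale (dotp u x) x1 - cscale (dotp v x) x2"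
    have "z \<in> C" "dotp u z = 0" "dotp v z = 0"
      using C \<open>x \<in> C\<close> x1 x2 by (simp_all add: z_def fv.subspace_diff fv.subspace_scale dotp_diff dotp_cscale)
    then have "z j = 0"
      by (rule j)
    then have "x j - dotp u x * x1 j - dotp v x * x2 j = 0"
      by (simp add: z_def)
    moreover have "dotp y x = dotp (unit_vec j) x - x1 j * dotp u x - x2 j * dotp v x"
      unfolding y_def dotp_def by (simp add: algebra_simps sum_subtractf sum_distrib_left sum.distrib)
    ultimately show "dotp y x = 0" by (simp add: dotp_unit_vec algebra_simps)
  qed
  moreover have "unit_vec j = cscale (x1 j) u + cscale (x2 j) v + y"
    by (auto simp: y_def fun_eq_iff)
  ultimately have "unit_vec j \<in> proj_line (dual C) u v"
    unfolding proj_line_def by blast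
  with misses show False by blast
qed

lemma subspace_common_kernel:
  assumes "fv.subspace C"
  shows "fv.subspace {x \<in> C. dotp u x = 0 \<and> dotp v x = 0}"
  by (rule fv.subspaceI) (auto simp: assms dotp_add dotp_cscale dotp_zero fv.subspace_0 fv.subspace_add
      fv.subspace_scale)

lemma dim_common_kernel_add_two_le:
  fixes C :: "('n::finite \<Rightarrow> 'a::{finite,field}) set"
  assumes C: "fv.subspace C"
    and x1: "x1 \<in> C" "dotp u x1 = 1" "dotp v x1 = 0"
    and x2: "x2 \<in> C" "dotp u x2 = 0" "dotp v x2 = 1"
  shows "fv.dim {x \<in> C. dotp u x = 0 \<and> dotp v x = 0} + 2 \<le> fv.dim C"
proof -
  define D where "D = {x \<in> C. dotp u x = 0 \<and> dotp v x = 0}"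
  have D: "fv.subspace D" "D \<subseteq> C"
    unfolding D_def using subspace_common_kernel[OF C] by auto
  have "x1 \<notin> fv.span (insert x2 D)"
  proof
    assume "x1 \<in> fv.span (insert x2 D)"
    then obtain t where "x1 - cscale t x2 \<in> D"
      using fv.span_insert[of x2 D] fv.span_eq_iff[THEN iffD2, OF D(1)] by auto
    with x1 x2 show False by (simp add: D_def dotp_diff dotp_cscale)
  qed
  moreover have "x2 \<notin> D"
    using x2 by (simp add: D_def)
  ultimately show ?thesis
    unfolding D_def[symmetric] using dim_add_two_le[OF D x1(1) x2(1)] by simp
qed

lemma covering_dim_le_if_line_misses_unit_vecs:
  assumes code: "is_code C k" and Supp_C: "Supp C = UNIV"
    and indep: "indep_mod (dual C) u v" and misses: "\<And>j. unit_vec j \<notin> proj_line (dual C) u v"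
  shows "covering_dim C \<le> enat (k - 2)"
proof -
  have C: "fv.subspace C" and dim_C: "fv.dim C = k"
    using code by (auto simp: is_code_def)
  obtain x1 where x1: "x1 \<in> C" "dotp u x1 = 1" "dotp v x1 = 0"
    using exists_dotp_one_zero[OF C indep] by blast
  obtain x2 where x2: "x2 \<in> C" "dotp v x2 = 1" "dotp u x2 = 0"
    using exists_dotp_one_zero[OF C indep_mod_commute[THEN iffD1, OF indep]] by blast
  define D where "D = {x \<in> C. dotp u x = 0 \<and> dotp v x = 0}"
  have D: "fv.subspace D" "D \<subseteq> C"
    unfolding D_def using subspace_common_kernel[OF C] by auto
  have Supp_D: "Supp D = UNIV"
    unfolding D_def using Supp_common_kernel[OF C x1 x2(1,3,2) misses] .
  have "fv.dim D + 2 \<le> k"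
    unfolding D_def using dim_common_kernel_add_two_le[OF C x1 x2(1,3,2)] dim_C by simp
  moreover have "undefined \<in> Supp D"
    using Supp_D by simp
  then obtain x where "x \<in> D" "x undefined \<noteq> 0"
    unfolding Supp_def supp_def by blast
  then have "0 < fv.dim D"
    using dim_pos_if_nonzero[of x D] by fastforce
  then have "(LEAST r. 0 < r \<and> (\<exists>D'. fv.subspace D' \<and> D' \<subseteq> C \<and> fv.dim D' = r \<and> Supp D' = UNIV))
      \<le> fv.dim D"
    using D Supp_D by (intro Least_le) blast
  ultimately show ?thesis
    unfolding covering_dim_def using Supp_C by simp
qed

lemma min_dist_le_weight:
  assumes "y \<in> D" "y \<noteq> 0"
  shows "min_dist D \<le> enat (weight y)"
  unfolding min_dist_def by (rule INF_lower) (use assms in auto)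

lemma exists_nonzero_if_min_dist_finite:
  assumes "min_dist D \<noteq> \<infinity>"
  shows "\<exists>y\<in>D. y \<noteq> 0"
  using assms unfolding min_dist_def by (auto simp: top_enat_def[symmetric])

theorem mainTheorem11:
  fixes C :: "('n::finite \<Rightarrow> 'a::{finite,field}) set" and k :: nat
  assumes "is_code C k"
    and "min_dist (dual C) = 4"
  shows "covering_dim C \<le> enat (k - 2)"
proof -
  have four_le_weight_dual: "4 \<le> weight y" if "y \<in> dual C" "y \<noteq> 0" for y
    using min_dist_le_weight[OF that] assms(2) by simp
  interpret min_weight_four "dual C"
    using subspace_dual four_le_weight_dual by unfold_locales
  have "min_dist (dual C) \<noteq> \<infinity>"
    using assms(2) by simp
  then obtain y where "y \<in> dual C" "y \<noteq> 0"
    using exists_nonzero_if_min_dist_finite by blast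
  then have "4 \<le> card (supp y)"
    using four_le_weight_dual unfolding weight_def by blast
  then have "3 \<le> card (supp y)"
    by simp
  then obtain S where "S \<subseteq> supp y" "card S = 3" "finite S"
    by (rule obtain_subset_with_card_n)
  then obtain a b c :: 'n where "a \<noteq> b" "c \<noteq> a" "c \<noteq> b"
    unfolding card_3_iff by blast
  then obtain u v where "indep_mod (dual C) u v" "\<And>j. unit_vec j \<notin> proj_line (dual C) u v"
    using exists_line_missing_unit_vecs by blast
  moreover have "Supp C = UNIV"
    using Supp_eq_UNIV_if_unit_vec_not_mem_dual unit_vec_not_mem .
  ultimately show ?thesis
    using covering_dim_le_if_line_misses_unit_vecs[OF assms(1)] by blast
qed

end
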